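(* (i) The ring homomorphism $$\phi:K\langle\mathbf x,\mathbf y\rangle^\dagger\to L^{\dagger\prime},\qquad\sum_{\mathbf v\in\mathbb Z^N_{\ge0}}f_{\mathbf v}(\mathbf x)\mathbf y^{\mathbf v}\mapsto\sum_{\mathbf v\in\mathbb Z^N_{\ge0}}f_{\mathbf v}(\mathbf x)\mathbf t^{v_1\mathbf w_1+\cdots+v_N\mathbf w_N}$$ is surjective. (ii) The homomorphism of left $\mathcal D^\dagger$-modules $$\varphi:\mathcal D^\dagger\to L^{\dagger\prime},\qquad\sum_{\mathbf v}f_{\mathbf v}(\mathbf x)\frac{\partial^{\mathbf v}}{\pi^{|\mathbf v|}}\mapsto\Big(\sum_{\mathbf v}f_{\mathbf v}(\mathbf x)\frac{\partial^{\mathbf v}}{\pi^{|\mathbf v|}}\Big)\cdot1=\sum_{\mathbf v}f_{\mathbf v}(\mathbf x)\mathbf t^{v_1\mathbf w_1+\cdots+v_N\mathbf w_N}$$ is surjective.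
   Context: Let $\mathbf w_1,\dots,\mathbf w_N\in\mathbb Z^n$ be the columns of an $n\times N$ integer matrix of rank $n$. $p$ a prime, $K$ a finite extension of $\mathbb Q_p$ containing $\pi$ with $\pi^{p-1}+p=0$, $|a|=p^{-\mathrm{ord}_p(a)}$. Multi-index notation $\mathbf x^{\mathbf v}$, $\mathbf y^{\mathbf v}$, $\mathbf t^{\mathbf w}$, $|\mathbf v|=\sum v_j$, $\partial^{\mathbf v}=\prod(\partial/\partial x_j)^{v_j}$. For $r>0$, $K\{r^{-1}\mathbf x\}$ = power series $\sum a_{\mathbf v}\mathbf x^{\mathbf v}$ with $|a_{\mathbf v}|r^{|\mathbf v|}$ bounded, norm $\|\cdot\|_r=\sup|a_{\mathbf v}|r^{|\mathbf v|}$. $K\langle\mathbf x,\mathbf y\rangle^\dagger=\bigcup_{r>1,s>1}\{\sum_{\mathbf v}f_{\mathbf v}(\mathbf x)\mathbf y^{\mathbf v}:f_{\mathbf v}\in K\{r^{-1}\mathbf x\},\ \|f_{\mathbf v}\|_rs^{|\mathbf v|}\text{ bounded}\}$. $\Delta$ = convex hull of $\{0,\mathbf w_j\}$, $\delta$ = cone generated by the $\mathbf w_j$, $d(\mathbf w)=\inf\{a>0:\mathbf w\in a\Delta\}$, $C(A)=\{\sum k_j\mathbf w_j:k_j\in\mathbb Z_{\ge0}\}$, $L^{\dagger\prime}=\bigcup_{r>1,s>1}\{\sum_{\mathbf w\in C(A)}a_{\mathbf w}(\mathbf x)\mathbf t^{\mathbf w}:a_{\mathbf w}\in K\{r^{-1}\mathbf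 x\},\ \|a_{\mathbf w}\|_rs^{d(\mathbf w)}\text{ bounded}\}$. $\mathcal D^\dagger=\bigcup_{r>1,s>1}\{\sum_{\mathbf v}f_{\mathbf v}(\mathbf x)\partial^{\mathbf v}/\pi^{|\mathbf v|}:f_{\mathbf v}\in K\{r^{-1}\mathbf x\},\ \|f_{\mathbf v}\|_rs^{|\mathbf v|}\text{ bounded}\}$; $L^{\dagger\prime}$ is a left $\mathcal D^\dagger$-module with $\partial/\partial x_j$ acting by $\partial/\partial x_j+\pi\mathbf t^{\mathbf w_j}$. *)

theory Defs
  imports "HOL-Analysis.Analysis"
begin

text \<open>Q_p is not available in the library, so "finite extension of Q_p
 with |a| = p^(-ord_p a)" is rendered by its standard characterisation: a field of
 characteristic 0, complete for a non-archimedean absolute value which is discrete,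
 has finite residue field, and is normalised by |p| = 1/p.\<close>

definition local_field_over_Qp :: "('a::field_char_0 \<Rightarrow> real) \<Rightarrow> nat \<Rightarrow> bool" where
  "local_field_over_Qp av p \<longleftrightarrow>
     av 0 = 0 \<and> (\<forall>x. x \<noteq> 0 \<longrightarrow> av x > 0) \<and>
     (\<forall>x y. av (x * y) = av x * av y) \<and>
     (\<forall>x y. av (x + y) \<le> max (av x) (av y)) \<and>
     av (of_nat p) = 1 / real p \<and>
     (\<forall>X :: nat \<Rightarrow> 'a.
        (\<forall>e>0. \<exists>M. \<forall>m\<ge>M. \<forall>k\<ge>M. av (X m - X k) < e) \<longrightarrow>
        (\<exists>L. \<forall>e>0. \<exists>M. \<forall>m\<ge>M. av (X m - L) < e)) \<and>
     (\<exists>uu. 0 < av uu \<and> av uu < 1 \<and> (\<forall>x. x \<noteq> 0 \<longrightarrow> (\<exists>k::int. av x = av uu powi k))) \<and>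
     finite ((\<lambda>x. {y. av y \<le> 1 \<and> av (y - x) < 1}) ` {x. av x \<le> 1})"

definition ksums :: "('a::ab_group_add \<Rightarrow> real) \<Rightarrow> ('i \<Rightarrow> 'a) \<Rightarrow> 'i set \<Rightarrow> 'a \<Rightarrow> bool" where
  "ksums av g S s \<longleftrightarrow>
     (\<forall>e>0. \<exists>F0. finite F0 \<and> F0 \<subseteq> S \<and>
        (\<forall>F. finite F \<and> F0 \<subseteq> F \<and> F \<subseteq> S \<longrightarrow> av (s - sum g F) < e))"

definition ksum :: "('a::ab_group_add \<Rightarrow> real) \<Rightarrow> ('i \<Rightarrow> 'a) \<Rightarrow> 'i set \<Rightarrow> 'a" where
  "ksum av g S = (THE s. ksums av g S s)"

text \<open>A power series in x is its coefficient function on multi-indices 'N \<Rightarrow> nat.\<close>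

definition mdeg :: "('N::finite \<Rightarrow> nat) \<Rightarrow> nat" where
  "mdeg v = (\<Sum>j\<in>UNIV. v j)"

definition in_Kr :: "('a \<Rightarrow> real) \<Rightarrow> real \<Rightarrow> (('N::finite \<Rightarrow> nat) \<Rightarrow> 'a) \<Rightarrow> bool" where
  "in_Kr av r f \<longleftrightarrow> bdd_above (range (\<lambda>u. av (f u) * r ^ mdeg u))"

definition xnorm :: "('a \<Rightarrow> real) \<Rightarrow> real \<Rightarrow> (('N::finite \<Rightarrow> nat) \<Rightarrow> 'a) \<Rightarrow> real" where
  "xnorm av r f = (SUP u. av (f u) * r ^ mdeg u)"

text \<open>K<x,y>^dagger: F v is the coefficient f_v(x) of y^v.\<close>
definition Kxy_dagger :: "('a \<Rightarrow> real) \<Rightarrow> (('N::finite \<Rightarrow> nat) \<Rightarrow> ('N \<Rightarrow> nat) \<Rightarrow> 'a) set" where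
  "Kxy_dagger av = {F. \<exists>r>1. \<exists>s>1. (\<forall>v. in_Kr av r (F v)) \<and>
      bdd_above (range (\<lambda>v. xnorm av r (F v) * s ^ mdeg v))}"

text \<open>D^dagger: P v is the coefficient f_v(x) of the operator \<partial>^v / \<piK>^|v|.\<close>
definition D_dagger :: "('a \<Rightarrow> real) \<Rightarrow> (('N::finite \<Rightarrow> nat) \<Rightarrow> ('N \<Rightarrow> nat) \<Rightarrow> 'a) set" where
  "D_dagger av = {P. \<exists>r>1. \<exists>s>1. (\<forall>v. in_Kr av r (P v)) \<and>
      bdd_above (range (\<lambda>v. xnorm av r (P v) * s ^ mdeg v))}"

text \<open>w j is the column vector w_j \<in> Z^n, coordinates indexed by 'n.\<close>

definition colvec :: "('N \<Rightarrow> 'n::finite \<Rightarrow> int) \<Rightarrow> 'N \<Rightarrow> real^'n" where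
  "colvec w j = (\<chi> i. real_of_int (w j i))"

definition Delta :: "('N \<Rightarrow> 'n::finite \<Rightarrow> int) \<Rightarrow> (real^'n) set" where
  "Delta w = convex hull (insert 0 (range (colvec w)))"

definition dfun :: "('N \<Rightarrow> 'n::finite \<Rightarrow> int) \<Rightarrow> ('n \<Rightarrow> int) \<Rightarrow> real" where
  "dfun w z = Inf {a. a > 0 \<and> (\<chi> i. real_of_int (z i)) \<in> (\<lambda>x. a *\<^sub>R x) ` Delta w}"

definition expo :: "('N::finite \<Rightarrow> 'n \<Rightarrow> int) \<Rightarrow> ('N \<Rightarrow> nat) \<Rightarrow> ('n \<Rightarrow> int)" where
  "expo w v = (\<lambda>i. \<Sum>j\<in>UNIV. int (v j) * w j i)"

definition CA :: "('N::finite \<Rightarrow> 'n \<Rightarrow> int) \<Rightarrow> ('n \<Rightarrow> int) set" where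
  "CA w = range (expo w)"

text \<open>L^{dagger'}: G z is the coefficient a_z(x) of t^z; G vanishes off C(A).\<close>
definition Ldagger :: "('a::zero \<Rightarrow> real) \<Rightarrow> ('N::finite \<Rightarrow> 'n::finite \<Rightarrow> int)
    \<Rightarrow> (('n \<Rightarrow> int) \<Rightarrow> ('N \<Rightarrow> nat) \<Rightarrow> 'a) set" where
  "Ldagger av w = {G. (\<forall>z. z \<notin> CA w \<longrightarrow> G z = (\<lambda>u. 0)) \<and>
      (\<exists>r>1. \<exists>s>1. (\<forall>z\<in>CA w. in_Kr av r (G z)) \<and>
         bdd_above ((\<lambda>z. xnorm av r (G z) * s powr dfun w z) ` CA w))}"

definition phi :: "('a::ab_group_add \<Rightarrow> real) \<Rightarrow> ('N::finite \<Rightarrow> 'n \<Rightarrow> int)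
    \<Rightarrow> (('N \<Rightarrow> nat) \<Rightarrow> ('N \<Rightarrow> nat) \<Rightarrow> 'a) \<Rightarrow> (('n \<Rightarrow> int) \<Rightarrow> ('N \<Rightarrow> nat) \<Rightarrow> 'a)" where
  "phi av w F = (\<lambda>z u. ksum av (\<lambda>v. F v u) {v. expo w v = z})"

definition xderiv :: "'N \<Rightarrow> (('N \<Rightarrow> nat) \<Rightarrow> 'a::semiring_1) \<Rightarrow> (('N \<Rightarrow> nat) \<Rightarrow> 'a)" where
  "xderiv j a = (\<lambda>u. of_nat (u j + 1) * a (u(j := u j + 1)))"

text \<open>d/dx_j acts as d/dx_j + piK t^(w_j)\<close>
definition Dop :: "'a::comm_ring_1 \<Rightarrow> ('N \<Rightarrow> 'n \<Rightarrow> int) \<Rightarrow> 'N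
    \<Rightarrow> (('n \<Rightarrow> int) \<Rightarrow> ('N \<Rightarrow> nat) \<Rightarrow> 'a) \<Rightarrow> (('n \<Rightarrow> int) \<Rightarrow> ('N \<Rightarrow> nat) \<Rightarrow> 'a)" where
  "Dop piK w j G = (\<lambda>z u. xderiv j (G z) u + piK * G (\<lambda>i. z i - w j i) u)"

text \<open>action of \<partial>^v = product over j of (Dop j)^(v j) (these operators commute)\<close>
definition dpow :: "'a::comm_ring_1 \<Rightarrow> ('N::finite \<Rightarrow> 'n \<Rightarrow> int) \<Rightarrow> ('N \<Rightarrow> nat)
    \<Rightarrow> (('n \<Rightarrow> int) \<Rightarrow> ('N \<Rightarrow> nat) \<Rightarrow> 'a) \<Rightarrow> (('n \<Rightarrow> int) \<Rightarrow> ('N \<Rightarrow> nat) \<Rightarrow> 'a)" where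
  "dpow piK w v = Finite_Set.fold (\<lambda>j h. (Dop piK w j ^^ v j) \<circ> h) id UNIV"

text \<open>(sum_v f_v(x) \<partial>^v / piK^|v|) . G, computed coefficientwise\<close>
definition act :: "('a::field \<Rightarrow> real) \<Rightarrow> 'a \<Rightarrow> ('N::finite \<Rightarrow> 'n \<Rightarrow> int)
    \<Rightarrow> (('N \<Rightarrow> nat) \<Rightarrow> ('N \<Rightarrow> nat) \<Rightarrow> 'a)
    \<Rightarrow> (('n \<Rightarrow> int) \<Rightarrow> ('N \<Rightarrow> nat) \<Rightarrow> 'a) \<Rightarrow> (('n \<Rightarrow> int) \<Rightarrow> ('N \<Rightarrow> nat) \<Rightarrow> 'a)" where
  "act av piK w P G = (\<lambda>z u. ksum av
      (\<lambda>v. \<Sum>u1\<in>{u1. \<forall>j. u1 j \<le> u j}.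
              P v u1 * inverse (piK ^ mdeg v) * dpow piK w v G z (\<lambda>j. u j - u1 j)) UNIV)"

definition oneL :: "('n \<Rightarrow> int) \<Rightarrow> ('N \<Rightarrow> nat) \<Rightarrow> 'a::{zero,one}" where
  "oneL = (\<lambda>z u. if z = (\<lambda>_. 0) \<and> u = (\<lambda>_. 0) then 1 else 0)"

definition varphi :: "('a::field \<Rightarrow> real) \<Rightarrow> 'a \<Rightarrow> ('N::finite \<Rightarrow> 'n \<Rightarrow> int)
    \<Rightarrow> (('N \<Rightarrow> nat) \<Rightarrow> ('N \<Rightarrow> nat) \<Rightarrow> 'a) \<Rightarrow> (('n \<Rightarrow> int) \<Rightarrow> ('N \<Rightarrow> nat) \<Rightarrow> 'a)" where
  "varphi av piK w P = act av piK w P oneL"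

end

theory Submission
  imports Defs
begin

text \<open>
  Every z in C(A) has a representation z = v_1 w_1 + ... + v_N w_N whose length |v| exceeds
  d(z) by at most a constant: write z as a nonnegative real combination of the w_j of total
  weight close to d(z) and round the weights down. The integer remainder ranges over a finite
  set, and by Dickson's lemma each remainder can be absorbed at bounded cost. Putting the
  coefficient a_z(x) of t^z at y^v for one such short representation v of each z gives a
  preimage under phi, and |v| \<le> d(z) + C converts the growth condition in s^d(z) into one
  in s^|v|. Finally, (\<partial>^v / \<pi>^|v|) 1 = t^(v_1 w_1 + ... + v_N w_N), so varphi and phi agree
  and (ii) follows from (i).
\<close>

section \<open>Dickson's lemma\<close>

lemma nat_seq_incseq_subseq:
  fixes s :: "nat \<Rightarrow> nat"
  obtains r where "strict_mono r" "incseq (s \<circ> r)"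
proof -
  obtain f where f: "strict_mono f" "monoseq (s \<circ> f)"
    using seq_monosub by (auto simp: o_def)
  show ?thesis
  proof (cases "incseq (s \<circ> f)")
    case True
    then show ?thesis using f(1) that by blast
  next
    case False
    then have dec: "decseq (s \<circ> f)"
      using f(2) by (simp add: monoseq_iff)
    obtain m where m: "\<And>n. (s \<circ> f) m \<le> (s \<circ> f) n"
      using ex_has_least_nat[of "\<lambda>_. True" 0 "s \<circ> f"] by auto
    have const: "(s \<circ> f) n = (s \<circ> f) m" if "n \<ge> m" for n
      using decseqD[OF dec that] m by (rule antisym)
    have "incseq (s \<circ> (f \<circ> (\<lambda>k. k + m)))"
      using const[of "_ + m"] by (intro incseq_SucI) (simp add: o_def)
    moreover have "strict_mono (f \<circ> (\<lambda>k. k + m))"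
      using f(1) by (simp add: strict_mono_def)
    ultimately show ?thesis using that by blast
  qed
qed

lemma componentwise_incseq_subseq:
  fixes f :: "nat \<Rightarrow> 'i \<Rightarrow> nat"
  assumes "finite J"
  shows "\<exists>r. strict_mono r \<and> (\<forall>j\<in>J. incseq (\<lambda>k. f (r k) j))"
  using assms
proof (induction J rule: finite_induct)
  case empty
  show ?case using strict_mono_id by blast
next
  case (insert j J)
  then obtain r where r: "strict_mono r" "\<forall>j\<in>J. incseq (\<lambda>k. f (r k) j)"
    by blast
  obtain r' where r': "strict_mono r'" "incseq ((\<lambda>k. f (r k) j) \<circ> r')"
    using nat_seq_incseq_subseq by blast
  have "incseq (\<lambda>k. f (r (r' k)) i)" if "i \<in> J" for i
    using r(2) that r'(1) by (simp add: incseq_def strict_mono_less_eq)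
  then have "\<forall>i\<in>insert j J. incseq (\<lambda>k. f ((r \<circ> r') k) i)"
    using r'(2) by (simp add: o_def)
  moreover have "strict_mono (r \<circ> r')"
    using r(1) r'(1) by (simp add: strict_mono_def)
  ultimately show ?case by blast
qed

lemma dickson_good_pair:
  fixes f :: "nat \<Rightarrow> 'i::finite \<Rightarrow> nat"
  obtains i j where "i < j" "f i \<le> f j"
proof -
  obtain r where r: "strict_mono r" "\<forall>j. incseq (\<lambda>k. f (r k) j)"
    using componentwise_incseq_subseq[of UNIV f] by auto
  have "f (r 0) \<le> f (r 1)"
    using r(2) by (auto simp: le_fun_def incseq_def)
  moreover have "r 0 < r 1"
    using r(1) by (simp add: strict_mono_def)
  ultimately show ?thesis using that by blast
qed

lemma dickson_finite_basis:
  fixes M :: "('i::finite \<Rightarrow> nat) set"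
  obtains B where "finite B" "B \<subseteq> M" "\<And>m. m \<in> M \<Longrightarrow> \<exists>b\<in>B. b \<le> m"
proof
  define B where "B = {b\<in>M. \<forall>m\<in>M. m \<le> b \<longrightarrow> m = b}"
  show "B \<subseteq> M" unfolding B_def by blast
  show "\<exists>b\<in>B. b \<le> m" if "m \<in> M" for m
    using that
  proof (induction "sum m UNIV" arbitrary: m rule: less_induct)
    case less
    show ?case
    proof (cases "m \<in> B")
      case False
      then obtain m' where m': "m' \<in> M" "m' \<le> m" "m' \<noteq> m"
        using less.prems unfolding B_def by blast
      then have "sum m' UNIV < sum m UNIV"
        by (intro sum_strict_mono_ex1) (auto simp: le_fun_def order_less_le)
      then obtain b where "b \<in> B" "b \<le> m'"
        using less.hyps m'(1) by blast
      then show ?thesis using m'(2) order_trans by blast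
    qed blast
  qed
  show "finite B"
  proof (rule ccontr)
    assume "infinite B"
    then obtain f :: "nat \<Rightarrow> _" where f: "inj f" "range f \<subseteq> B"
      using infinite_countable_subset by blast
    obtain i j where ij: "i < j" "f i \<le> f j"
      using dickson_good_pair by blast
    then have "f i = f j"
      using f(2) unfolding B_def by blast
    then show False using f(1) ij(1) by (simp add: inj_eq)
  qed
qed

section \<open>Unconditional sums for an ultrametric absolute value\<close>

locale ultrametric_abs_value =
  fixes av :: "'a::field \<Rightarrow> real"
  assumes av_zero [simp]: "av 0 = 0"
    and av_pos: "x \<noteq> 0 \<Longrightarrow> 0 < av x"
    and av_mult: "av (x * y) = av x * av y"
    and av_ultrametric: "av (x + y) \<le> max (av x) (av y)"
begin

lemma av_nonneg: "0 \<le> av x"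
  using av_pos[of x] by (cases "x = 0") auto

lemma av_one: "av 1 = 1"
  using av_mult[of 1 1] av_pos[of 1] by simp

lemma av_minus: "av (- x) = av x"
proof -
  have "av (- 1) * av (- 1) = 1"
    using av_mult[of "- 1" "- 1"] av_one by simp
  then have "(av (- 1) - 1) * (av (- 1) + 1) = 0"
    by (simp add: algebra_simps)
  then have "av (- 1) = 1"
    using av_nonneg[of "- 1"] by simp
  then show ?thesis
    using av_mult[of "- 1" x] by simp
qed

lemma ksums_unique:
  assumes "ksums av g S s" and "ksums av g S t"
  shows "s = t"
proof (rule ccontr)
  assume "s \<noteq> t"
  then have e: "0 < av (s - t)"
    by (simp add: av_pos)
  obtain F1 where F1: "finite F1" "F1 \<subseteq> S"
    "\<forall>F. finite F \<and> F1 \<subseteq> F \<and> F \<subseteq> S \<longrightarrow> av (s - sum g F) < av (s - t)"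
    using assms(1) e unfolding ksums_def by meson
  obtain F2 where F2: "finite F2" "F2 \<subseteq> S"
    "\<forall>F. finite F \<and> F2 \<subseteq> F \<and> F \<subseteq> S \<longrightarrow> av (t - sum g F) < av (s - t)"
    using assms(2) e unfolding ksums_def by meson
  let ?F = "F1 \<union> F2"
  have "av (s - sum g ?F) < av (s - t)" "av (t - sum g ?F) < av (s - t)"
    using F1 F2 by simp_all
  moreover have "av (s - t) \<le> max (av (s - sum g ?F)) (av (sum g ?F - t))"
    using av_ultrametric[of "s - sum g ?F" "sum g ?F - t"] by simp
  moreover have "av (sum g ?F - t) = av (t - sum g ?F)"
    using av_minus[of "t - sum g ?F"] by simp
  ultimately show False by simp
qed

lemma ksums_finite_support:
  assumes "finite T" "T \<subseteq> S" "\<And>x. x \<in> S - T \<Longrightarrow> g x = 0"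
  shows "ksums av g S (sum g T)"
  unfolding ksums_def
proof (intro allI impI)
  fix e :: real
  assume "0 < e"
  have "av (sum g T - sum g F) < e" if "finite F" "T \<subseteq> F" "F \<subseteq> S" for F
  proof -
    have "sum g F = sum g T"
      using that assms(3) by (intro sum.mono_neutral_right) auto
    then show ?thesis
      using \<open>0 < e\<close> by simp
  qed
  then show "\<exists>F0. finite F0 \<and> F0 \<subseteq> S \<and>
      (\<forall>F. finite F \<and> F0 \<subseteq> F \<and> F \<subseteq> S \<longrightarrow> av (sum g T - sum g F) < e)"
    using assms(1,2) by blast
qed

lemma ksum_finite_support:
  assumes "finite T" "T \<subseteq> S" "\<And>x. x \<in> S - T \<Longrightarrow> g x = 0"
  shows "ksum av g S = sum g T"
  unfolding ksum_def
proof (rule the_equality)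
  show "ksums av g S (sum g T)"
    by (rule ksums_finite_support[OF assms])
next
  fix s
  assume "ksums av g S s"
  then show "s = sum g T"
    using ksums_finite_support[OF assms] by (rule ksums_unique)
qed

lemma in_Kr_zero: "in_Kr av r (\<lambda>_. 0)"
  by (simp add: in_Kr_def)

lemma xnorm_zero: "xnorm av r (\<lambda>_. 0) = 0"
  by (simp add: xnorm_def)

lemma xnorm_nonneg:
  fixes f :: "('N::finite \<Rightarrow> nat) \<Rightarrow> 'a"
  assumes "in_Kr av r f" and "0 < r"
  shows "0 \<le> xnorm av r f"
proof -
  have "0 \<le> av (f (\<lambda>_. 0)) * r ^ mdeg (\<lambda>_::'N::finite. 0::nat)"
    using av_nonneg assms(2) by simp
  also have "\<dots> \<le> xnorm av r f"
    using assms(1) unfolding xnorm_def in_Kr_def by (rule cSUP_upper[OF UNIV_I])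
  finally show ?thesis .
qed

end

lemma local_field_ultrametric_abs_value:
  assumes "local_field_over_Qp av p"
  shows "ultrametric_abs_value av"
  using assms unfolding local_field_over_Qp_def ultrametric_abs_value_def
  by (elim conjE) (intro conjI; assumption)

lemma ksums_extend_zeroD:
  assumes "ksums av (\<lambda>x. if x \<in> S then g x else 0) UNIV s"
  shows "ksums av g S s"
  unfolding ksums_def
proof (intro allI impI)
  let ?g = "\<lambda>x. if x \<in> S then g x else 0"
  fix e :: real
  assume "0 < e"
  then obtain F0 where F0: "finite F0" "\<forall>F. finite F \<and> F0 \<subseteq> F \<longrightarrow> av (s - sum ?g F) < e"
    using assms unfolding ksums_def by auto
  have "av (s - sum g F) < e" if "finite F" "F0 \<inter> S \<subseteq> F" "F \<subseteq> S" for F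
  proof -
    have fin: "finite (F \<union> F0)"
      using that(1) F0(1) by simp
    have "(F \<union> F0) \<inter> S = F"
      using that(2,3) by blast
    then have "sum ?g (F \<union> F0) = sum g F"
      using sum.inter_restrict[OF fin, where B = S, symmetric] by simp
    moreover have "av (s - sum ?g (F \<union> F0)) < e"
      using F0(2) fin by blast
    ultimately show ?thesis
      by simp
  qed
  then show "\<exists>F0. finite F0 \<and> F0 \<subseteq> S \<and>
      (\<forall>F. finite F \<and> F0 \<subseteq> F \<and> F \<subseteq> S \<longrightarrow> av (s - sum g F) < e)"
    using F0(1) by (intro exI[of _ "F0 \<inter> S"]) auto
qed

lemma ksums_extend_zeroI:
  assumes "ksums av g S s"
  shows "ksums av (\<lambda>x. if x \<in> S then g x else 0) UNIV s"
  unfolding ksums_def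
proof (intro allI impI)
  let ?g = "\<lambda>x. if x \<in> S then g x else 0"
  fix e :: real
  assume "0 < e"
  then obtain F0 where F0: "finite F0" "F0 \<subseteq> S"
      "\<forall>F. finite F \<and> F0 \<subseteq> F \<and> F \<subseteq> S \<longrightarrow> av (s - sum g F) < e"
    using assms unfolding ksums_def by auto
  have "av (s - sum ?g F) < e" if "finite F" "F0 \<subseteq> F" for F
  proof -
    have "finite (F \<inter> S)" "F0 \<subseteq> F \<inter> S"
      using that F0(2) by auto
    then have "av (s - sum g (F \<inter> S)) < e"
      using F0(3) by blast
    then show ?thesis
      by (simp only: sum.inter_restrict[OF that(1), where B = S, symmetric])
  qed
  then show "\<exists>F0. finite F0 \<and> F0 \<subseteq> UNIV \<and>
      (\<forall>F. finite F \<and> F0 \<subseteq> F \<and> F \<subseteq> UNIV \<longrightarrow> av (s - sum ?g F) < e)"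
    using F0(1) by auto
qed

lemma ksums_extend_zero:
  "ksums av (\<lambda>x. if x \<in> S then g x else 0) UNIV s \<longleftrightarrow> ksums av g S s"
  using ksums_extend_zeroD ksums_extend_zeroI by blast

lemma ksum_extend_zero:
  "ksum av (\<lambda>x. if x \<in> S then g x else 0) UNIV = ksum av g S"
  unfolding ksum_def ksums_extend_zero ..

section \<open>The operators \<partial>^v applied to 1\<close>

lemma Dop_commute: "Dop piK w i (Dop piK w j G) = Dop piK w j (Dop piK w i G)"
  by (cases "i = j") (auto simp: Dop_def xderiv_def fun_eq_iff algebra_simps fun_upd_twist)

lemma comp_fun_commute_Dop_funpow_comp:
  "comp_fun_commute (\<lambda>j h. (Dop piK w j ^^ v j) \<circ> h)"
proof -
  interpret Dop: comp_fun_commute "Dop piK w"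
    by standard (simp add: fun_eq_iff Dop_commute)
  interpret comp_fun_commute "\<lambda>j. Dop piK w j ^^ v j"
    by (rule Dop.comp_fun_commute_funpow)
  show ?thesis
    by standard (simp add: fun_eq_iff comp_fun_commute flip: comp_assoc)
qed

definition tmonomial :: "'a \<Rightarrow> ('n \<Rightarrow> int) \<Rightarrow> ('n \<Rightarrow> int) \<Rightarrow> ('N \<Rightarrow> nat) \<Rightarrow> 'a::zero" where
  "tmonomial c z0 = (\<lambda>z u. if u = (\<lambda>_. 0) \<and> z = z0 then c else 0)"

lemma oneL_eq_tmonomial: "oneL = tmonomial 1 (\<lambda>_. 0)"
  by (auto simp: oneL_def tmonomial_def fun_eq_iff)

lemma Dop_tmonomial:
  fixes w :: "'N \<Rightarrow> 'n \<Rightarrow> int"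
  shows "Dop piK w j (tmonomial c z0) = tmonomial (piK * c) (\<lambda>i. z0 i + w j i)"
proof -
  have "u(j := Suc (u j)) \<noteq> (\<lambda>_. 0)" for u :: "'N \<Rightarrow> nat"
    by (metis fun_upd_same nat.distinct(1))
  moreover have "(\<lambda>i. z i - w j i) = z0 \<longleftrightarrow> z = (\<lambda>i. z0 i + w j i)" for z
    by (auto simp: fun_eq_iff algebra_simps)
  ultimately show ?thesis
    by (auto simp: Dop_def xderiv_def tmonomial_def fun_eq_iff)
qed

lemma Dop_funpow_tmonomial:
  "(Dop piK w j ^^ k) (tmonomial c z0) = tmonomial (piK ^ k * c) (\<lambda>i. z0 i + int k * w j i)"
  by (induction k) (simp_all add: Dop_tmonomial algebra_simps)

lemma fold_Dop_funpow_tmonomial: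
  assumes "finite S"
  shows "Finite_Set.fold (\<lambda>j h. (Dop piK w j ^^ v j) \<circ> h) id S (tmonomial c z0)
     = tmonomial (piK ^ (\<Sum>j\<in>S. v j) * c) (\<lambda>i. z0 i + (\<Sum>j\<in>S. int (v j) * w j i))"
  using assms
proof (induction S rule: finite_induct)
  case (insert j S)
  let ?f = "\<lambda>j h. (Dop piK w j ^^ v j) \<circ> h"
  interpret comp_fun_commute ?f
    by (rule comp_fun_commute_Dop_funpow_comp)
  have "Finite_Set.fold ?f id (insert j S) (tmonomial c z0)
      = (Dop piK w j ^^ v j) (Finite_Set.fold ?f id S (tmonomial c z0))"
    by (simp only: fold_insert[OF insert(1,2)] comp_apply)
  also have "\<dots> = (Dop piK w j ^^ v j)
      (tmonomial (piK ^ (\<Sum>j\<in>S. v j) * c) (\<lambda>i. z0 i + (\<Sum>j\<in>S. int (v j) * w j i)))"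
    by (simp only: insert.IH)
  also have "\<dots> = tmonomial (piK ^ (\<Sum>j\<in>insert j S. v j) * c)
      (\<lambda>i. z0 i + (\<Sum>j\<in>insert j S. int (v j) * w j i))"
    using insert(1,2) by (simp add: Dop_funpow_tmonomial algebra_simps power_add)
  finally show ?case .
qed simp

lemma dpow_oneL: "dpow piK w v oneL = tmonomial (piK ^ mdeg v) (expo w v)"
  by (simp add: dpow_def oneL_eq_tmonomial fold_Dop_funpow_tmonomial mdeg_def expo_def)

lemma finite_pointwise_below: "finite {u'::'N::finite \<Rightarrow> nat. \<forall>j. u' j \<le> u j}"
proof (rule finite_subset)
  show "{u'. \<forall>j. u' j \<le> u j} \<subseteq> PiE UNIV (\<lambda>j. {..u j})" by auto
qed (simp add: finite_PiE)

lemma varphi_eq_phi: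
  assumes "piK \<noteq> 0"
  shows "varphi av piK w P = phi av w P"
proof (intro ext)
  fix z u
  have "(\<Sum>u'\<in>{u'. \<forall>j. u' j \<le> u j}.
          P v u' * inverse (piK ^ mdeg v) * dpow piK w v oneL z (\<lambda>j. u j - u' j))
        = (if v \<in> {v. expo w v = z} then P v u else 0)" for v
  proof -
    have "(\<lambda>j. u j - u' j) = (\<lambda>_. 0) \<longleftrightarrow> u' = u" if "\<forall>j. u' j \<le> u j" for u'
      using that by (auto simp: fun_eq_iff intro: antisym)
    then have "(\<Sum>u'\<in>{u'. \<forall>j. u' j \<le> u j}.
          P v u' * inverse (piK ^ mdeg v) * dpow piK w v oneL z (\<lambda>j. u j - u' j))
        = (\<Sum>u'\<in>{u'. \<forall>j. u' j \<le> u j}. if u' = u then (if expo w v = z then P v u else 0) else 0)"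
      using assms by (intro sum.cong) (auto simp: dpow_oneL tmonomial_def)
    then show ?thesis
      using finite_pointwise_below[of u] by simp
  qed
  then have "varphi av piK w P z u
      = ksum av (\<lambda>v. if v \<in> {v. expo w v = z} then P v u else 0) UNIV"
    unfolding varphi_def act_def by (simp only:)
  also have "\<dots> = phi av w P z u"
    unfolding phi_def by (rule ksum_extend_zero)
  finally show "varphi av piK w P z u = phi av w P z u" .
qed

section \<open>Short representations of the points of C(A)\<close>

lemma Delta_subset_combinations:
  fixes w :: "'N::finite \<Rightarrow> 'n::finite \<Rightarrow> int"
  shows "Delta w \<subseteq> {(\<Sum>j\<in>UNIV. c j *\<^sub>R colvec w j) | c. (\<forall>j. 0 \<le> c j) \<and> sum c UNIV \<le> 1}"
    (is "_ \<subseteq> ?T")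
  unfolding Delta_def
proof (rule hull_minimal)
  have "0 \<in> ?T"
    by (intro CollectI exI[of _ "\<lambda>_. 0"]) simp
  moreover have "colvec w j \<in> ?T" for j
  proof -
    have "(\<Sum>i\<in>UNIV. (if i = j then 1 else 0) *\<^sub>R colvec w i) = colvec w j"
      by (simp add: if_distrib[of "\<lambda>a. a *\<^sub>R _"] cong: if_cong)
    then show ?thesis
      by (intro CollectI exI[of _ "\<lambda>i. if i = j then 1 else 0"]) simp
  qed
  ultimately show "insert 0 (range (colvec w)) \<subseteq> ?T"
    by blast
  show "convex ?T"
    unfolding convex_def
  proof (intro ballI allI impI)
    fix x y :: "real^'n" and u v :: real
    assume "x \<in> ?T" "y \<in> ?T" and uv: "0 \<le> u" "0 \<le> v" "u + v = 1"
    then obtain c1 c2 where c1: "\<forall>j. 0 \<le> c1 j" "sum c1 UNIV \<le> 1" "x = (\<Sum>j\<in>UNIV. c1 j *\<^sub>R colvec w j)"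
      and c2: "\<forall>j. 0 \<le> c2 j" "sum c2 UNIV \<le> 1" "y = (\<Sum>j\<in>UNIV. c2 j *\<^sub>R colvec w j)"
      by blast
    have "sum (\<lambda>j. u * c1 j + v * c2 j) UNIV = u * sum c1 UNIV + v * sum c2 UNIV"
      by (simp add: sum.distrib sum_distrib_left)
    also have "\<dots> \<le> u + v"
      using c1(2) c2(2) uv by (intro add_mono mult_left_le) auto
    finally have "sum (\<lambda>j. u * c1 j + v * c2 j) UNIV \<le> 1"
      using uv by simp
    moreover have "u *\<^sub>R x + v *\<^sub>R y = (\<Sum>j\<in>UNIV. (u * c1 j + v * c2 j) *\<^sub>R colvec w j)"
      unfolding c1(3) c2(3)
      by (simp add: scaleR_sum_right scaleR_add_left sum.distrib)
    ultimately show "u *\<^sub>R x + v *\<^sub>R y \<in> ?T"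
      using c1(1) c2(1) uv by (intro CollectI exI[of _ "\<lambda>j. u * c1 j + v * c2 j"]) simp
  qed
qed

lemma expo_as_combination:
  "(\<chi> i. real_of_int (expo w u i)) = (\<Sum>j\<in>UNIV. real (u j) *\<^sub>R colvec w j)"
  by (simp add: vec_eq_iff expo_def colvec_def)

lemma expo_in_scaled_Delta:
  fixes w :: "'N::finite \<Rightarrow> 'n::finite \<Rightarrow> int"
  shows "\<exists>a>0. (\<chi> i. real_of_int (expo w u i)) \<in> (\<lambda>x. a *\<^sub>R x) ` Delta w"
proof (cases "mdeg u = 0")
  case True
  then have "(\<chi> i. real_of_int (expo w u i)) = 0"
    by (simp add: vec_eq_iff expo_def mdeg_def)
  moreover have "(0::real^'n) \<in> Delta w"
    unfolding Delta_def by (simp add: hull_inc)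
  ultimately show ?thesis
    by (intro exI[of _ 1]) auto
next
  case False
  define a where "a = real (mdeg u)"
  have a: "a > 0"
    using False unfolding a_def by simp
  define y where "y = (\<Sum>j\<in>UNIV. (real (u j) / a) *\<^sub>R colvec w j)"
  have "y \<in> Delta w"
    unfolding y_def Delta_def
  proof (rule convex_sum)
    show "(\<Sum>i\<in>UNIV. real (u i) / a) = 1"
      using a unfolding a_def mdeg_def by (simp add: sum_divide_distrib[symmetric])
  qed (use a in \<open>auto simp: hull_inc\<close>)
  moreover have "(\<chi> i. real_of_int (expo w u i)) = a *\<^sub>R y"
    unfolding expo_as_combination y_def using a by (simp add: scaleR_sum_right)
  ultimately show ?thesis
    using a by blast
qed

lemma dfun_nearly_attained:
  fixes w :: "'N::finite \<Rightarrow> 'n::finite \<Rightarrow> int"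
  assumes "z \<in> CA w"
  obtains c where "\<And>j. 0 \<le> c j" "sum c UNIV < dfun w z + 1"
    "\<And>i. real_of_int (z i) = (\<Sum>j\<in>UNIV. c j * real_of_int (w j i))"
proof -
  define A where "A = {a. a > 0 \<and> (\<chi> i. real_of_int (z i)) \<in> (\<lambda>x. a *\<^sub>R x) ` Delta w}"
  have "A \<noteq> {}"
    using assms expo_in_scaled_Delta unfolding A_def CA_def by blast
  then obtain a where a: "a \<in> A" "a < dfun w z + 1"
    using cInf_lessD[of A "Inf A + 1"] unfolding dfun_def A_def by auto
  then obtain y where y: "y \<in> Delta w" "(\<chi> i. real_of_int (z i)) = a *\<^sub>R y" and "a > 0"
    unfolding A_def by blast
  then obtain c where c: "\<forall>j. 0 \<le> c j" "sum c UNIV \<le> 1" "y = (\<Sum>j\<in>UNIV. c j *\<^sub>R colvec w j)"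
    using Delta_subset_combinations by blast
  show ?thesis
  proof
    show "0 \<le> a * c j" for j
      using c(1) \<open>a > 0\<close> by simp
    have "sum (\<lambda>j. a * c j) UNIV \<le> a"
      using c(2) \<open>a > 0\<close> by (simp add: sum_distrib_left[symmetric] mult_left_le)
    then show "sum (\<lambda>j. a * c j) UNIV < dfun w z + 1"
      using a(2) by linarith
    show "real_of_int (z i) = (\<Sum>j\<in>UNIV. a * c j * real_of_int (w j i))" for i
      using arg_cong[OF y(2), of "\<lambda>x. x $ i"] unfolding c(3)
      by (simp add: colvec_def sum_distrib_left mult.assoc)
  qed
qed

lemma expo_add: "expo w (\<lambda>j. a j + b j) = (\<lambda>i. expo w a i + expo w b i)"
  by (simp add: expo_def fun_eq_iff algebra_simps sum.distrib)

lemma expo_diff: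
  assumes "b \<le> k"
  shows "expo w (\<lambda>j. k j - b j) = (\<lambda>i. expo w k i - expo w b i)"
  using assms by (simp add: expo_def fun_eq_iff le_fun_def of_nat_diff algebra_simps sum_subtractf)

lemma representation_shift_bound:
  fixes w :: "'N::finite \<Rightarrow> 'n \<Rightarrow> int" and q :: "'n \<Rightarrow> int"
  obtains C where "\<And>k. (\<lambda>i. expo w k i + q i) \<in> CA w
    \<Longrightarrow> \<exists>v. expo w v = (\<lambda>i. expo w k i + q i) \<and> mdeg v \<le> mdeg k + C"
proof -
  \<comment> \<open>By Dickson's lemma M has a finite basis B; a fixed representation of expo b + q,
    extended by k - b, represents expo k + q.\<close>
  define M where "M = {k. (\<lambda>i. expo w k i + q i) \<in> CA w}"
  obtain B where B: "finite B" "B \<subseteq> M" "\<And>k. k \<in> M \<Longrightarrow> \<exists>b\<in>B. b \<le> k"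
    using dickson_finite_basis[of M] by blast
  have reachable: "\<forall>b\<in>B. \<exists>u. expo w u = (\<lambda>i. expo w b i + q i)"
  proof
    fix b
    assume "b \<in> B"
    then have "(\<lambda>i. expo w b i + q i) \<in> range (expo w)"
      using B(2) unfolding M_def CA_def by blast
    then show "\<exists>u. expo w u = (\<lambda>i. expo w b i + q i)"
      by (metis rangeE)
  qed
  obtain U where U: "\<forall>b\<in>B. expo w (U b) = (\<lambda>i. expo w b i + q i)"
    using bchoice[OF reachable] by blast
  show ?thesis
  proof
    fix k
    assume "(\<lambda>i. expo w k i + q i) \<in> CA w"
    then obtain b where b: "b \<in> B" "b \<le> k"
      using B(3) unfolding M_def by blast
    define v where "v = (\<lambda>j. U b j + (k j - b j))"
    have "expo w v = (\<lambda>i. expo w k i + q i)"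
      using U b(1) unfolding v_def expo_add expo_diff[OF b(2)] by (simp add: add.commute)
    moreover have "mdeg v \<le> mdeg k + (\<Sum>b\<in>B. mdeg (U b))"
    proof -
      have "mdeg v \<le> mdeg (U b) + mdeg k"
        unfolding v_def mdeg_def sum.distrib by (intro add_left_mono sum_mono) simp
      moreover have "mdeg (U b) \<le> (\<Sum>b\<in>B. mdeg (U b))"
        using B(1) b(1) by (intro member_le_sum) auto
      ultimately show ?thesis by simp
    qed
    ultimately show "\<exists>v. expo w v = (\<lambda>i. expo w k i + q i) \<and> mdeg v \<le> mdeg k + (\<Sum>b\<in>B. mdeg (U b))"
      by blast
  qed
qed

lemma floor_combination_remainder_bound:
  fixes w :: "'N::finite \<Rightarrow> 'n \<Rightarrow> int"
  assumes "\<And>j. 0 \<le> c j" and "real_of_int (z i) = (\<Sum>j\<in>UNIV. c j * real_of_int (w j i))"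
  shows "\<bar>z i - expo w (\<lambda>j. nat \<lfloor>c j\<rfloor>) i\<bar> \<le> (\<Sum>j\<in>UNIV. \<bar>w j i\<bar>)"
proof -
  have frac: "\<bar>c j - real (nat \<lfloor>c j\<rfloor>)\<bar> \<le> 1" for j
    using assms(1)[of j] by linarith
  have "real_of_int (z i - expo w (\<lambda>j. nat \<lfloor>c j\<rfloor>) i)
      = (\<Sum>j\<in>UNIV. (c j - real (nat \<lfloor>c j\<rfloor>)) * real_of_int (w j i))"
    using assms by (simp add: expo_def algebra_simps sum_subtractf)
  also have "\<bar>\<dots>\<bar> \<le> (\<Sum>j\<in>UNIV. \<bar>(c j - real (nat \<lfloor>c j\<rfloor>)) * real_of_int (w j i)\<bar>)"
    by (rule sum_abs)
  also have "\<dots> \<le> (\<Sum>j\<in>UNIV. \<bar>real_of_int (w j i)\<bar>)"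
    using frac by (intro sum_mono) (simp add: abs_mult mult_left_le_one_le)
  finally have "real_of_int \<bar>z i - expo w (\<lambda>j. nat \<lfloor>c j\<rfloor>) i\<bar> \<le> real_of_int (\<Sum>j\<in>UNIV. \<bar>w j i\<bar>)"
    by simp
  then show ?thesis
    by (simp only: of_int_le_iff)
qed

lemma short_representation:
  fixes w :: "'N::finite \<Rightarrow> 'n::finite \<Rightarrow> int"
  obtains C where "\<And>z. z \<in> CA w \<Longrightarrow> \<exists>v. expo w v = z \<and> real (mdeg v) \<le> dfun w z + C"
proof -
  define Q where "Q = {q::'n \<Rightarrow> int. \<forall>i. \<bar>q i\<bar> \<le> (\<Sum>j\<in>UNIV. \<bar>w j i\<bar>)}"
  have "Q \<subseteq> PiE UNIV (\<lambda>i. {- (\<Sum>j\<in>UNIV. \<bar>w j i\<bar>) .. (\<Sum>j\<in>UNIV. \<bar>w j i\<bar>)})"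
    unfolding Q_def by (auto simp: abs_le_iff minus_le_iff)
  then have "finite Q"
    by (rule finite_subset) (simp add: finite_PiE)
  have "\<forall>q. \<exists>C. \<forall>k. (\<lambda>i. expo w k i + q i) \<in> CA w
      \<longrightarrow> (\<exists>v. expo w v = (\<lambda>i. expo w k i + q i) \<and> mdeg v \<le> mdeg k + C)"
    by (metis representation_shift_bound)
  then obtain Cq where Cq: "\<And>q k. (\<lambda>i. expo w k i + q i) \<in> CA w
      \<Longrightarrow> \<exists>v. expo w v = (\<lambda>i. expo w k i + q i) \<and> mdeg v \<le> mdeg k + Cq q"
    by metis
  show ?thesis
  proof
    fix z
    assume z: "z \<in> CA w"
    then obtain c where c: "\<And>j. 0 \<le> c j" "sum c UNIV < dfun w z + 1"
      "\<And>i. real_of_int (z i) = (\<Sum>j\<in>UNIV. c j * real_of_int (w j i))"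
      using dfun_nearly_attained[OF z] by metis
    \<comment> \<open>Rounding down costs at most one unit of each w_j, so the remainder q lies in Q.\<close>
    define k where "k = (\<lambda>j. nat \<lfloor>c j\<rfloor>)"
    define q where "q = (\<lambda>i. z i - expo w k i)"
    have "q \<in> Q"
      unfolding Q_def q_def k_def using c(1,3) by (blast intro: floor_combination_remainder_bound)
    have "z = (\<lambda>i. expo w k i + q i)"
      by (simp add: q_def)
    then obtain v where v: "expo w v = z" "mdeg v \<le> mdeg k + Cq q"
      using Cq[of k q] z by auto
    have "real (mdeg k) \<le> sum c UNIV"
      unfolding mdeg_def k_def using c(1) by (simp add: sum_mono)
    moreover have "Cq q \<le> (\<Sum>q\<in>Q. Cq q)"
      using \<open>finite Q\<close> \<open>q \<in> Q\<close> by (intro member_le_sum) auto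
    ultimately have "real (mdeg v) \<le> dfun w z + (real (\<Sum>q\<in>Q. Cq q) + 1)"
      using v(2) c(2) by linarith
    with v(1) show "\<exists>v. expo w v = z \<and> real (mdeg v) \<le> dfun w z + (real (\<Sum>q\<in>Q. Cq q) + 1)"
      by blast
  qed
qed

section \<open>Surjectivity of phi and varphi\<close>

definition lift_coeffs :: "(('n \<Rightarrow> int) \<Rightarrow> ('N::finite \<Rightarrow> nat)) \<Rightarrow> ('N \<Rightarrow> 'n \<Rightarrow> int)
    \<Rightarrow> (('n \<Rightarrow> int) \<Rightarrow> ('N \<Rightarrow> nat) \<Rightarrow> 'a) \<Rightarrow> ('N \<Rightarrow> nat) \<Rightarrow> ('N \<Rightarrow> nat) \<Rightarrow> 'a::zero" where
  "lift_coeffs rep w G v = (if rep (expo w v) = v then G (expo w v) else (\<lambda>_. 0))"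

context ultrametric_abs_value
begin

lemma phi_lift_coeffs:
  assumes rep: "\<And>z. z \<in> CA w \<Longrightarrow> expo w (rep z) = z"
    and G0: "\<And>z. z \<notin> CA w \<Longrightarrow> G z = (\<lambda>_. 0)"
  shows "phi av w (lift_coeffs rep w G) = G"
proof (intro ext)
  fix z u
  show "phi av w (lift_coeffs rep w G) z u = G z u"
  proof (cases "z \<in> CA w")
    case True
    have "ksum av (\<lambda>v. lift_coeffs rep w G v u) {v. expo w v = z}
        = sum (\<lambda>v. lift_coeffs rep w G v u) {rep z}"
      by (rule ksum_finite_support) (auto simp: lift_coeffs_def rep[OF True])
    then show ?thesis
      by (simp add: phi_def lift_coeffs_def rep[OF True])
  next
    case False
    then have "{v. expo w v = z} = {}"
      unfolding CA_def by auto
    then show ?thesis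
      using G0[OF False] ksum_finite_support[of "{}" "{}"] by (simp add: phi_def)
  qed
qed

lemma lift_coeffs_in_Kxy_dagger:
  assumes G: "G \<in> Ldagger av w"
    and short: "\<And>z. z \<in> CA w \<Longrightarrow> real (mdeg (rep z)) \<le> dfun w z + C"
  shows "lift_coeffs rep w G \<in> Kxy_dagger av"
proof -
  obtain r s where rs: "r > 1" "s > 1" "\<forall>z\<in>CA w. in_Kr av r (G z)"
      "bdd_above ((\<lambda>z. xnorm av r (G z) * s powr dfun w z) ` CA w)"
    using G unfolding Ldagger_def by blast
  then obtain Bd where Bd: "\<And>z. z \<in> CA w \<Longrightarrow> xnorm av r (G z) * s powr dfun w z \<le> Bd"
    unfolding bdd_above_def by auto
  let ?F = "lift_coeffs rep w G"
  have expo_CA: "expo w v \<in> CA w" for v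
    unfolding CA_def by simp
  have "in_Kr av r (?F v)" for v
    using rs(3) expo_CA by (simp add: lift_coeffs_def in_Kr_zero)
  moreover have "xnorm av r (?F v) * s ^ mdeg v \<le> max 0 (Bd * s powr C)" for v
  proof (cases "rep (expo w v) = v")
    case True
    define z where "z = expo w v"
    have z: "z \<in> CA w" and Fv: "?F v = G z"
      using True by (simp_all add: z_def expo_CA lift_coeffs_def)
    have "s ^ mdeg v = s powr real (mdeg v)"
      using rs(2) by (simp add: powr_realpow)
    also have "\<dots> \<le> s powr (dfun w z + C)"
      using short[OF z] True rs(2) unfolding z_def by (intro powr_mono) auto
    finally have "xnorm av r (?F v) * s ^ mdeg v \<le> xnorm av r (G z) * s powr dfun w z * s powr C"
      unfolding Fv using xnorm_nonneg[of r "G z"] rs(1,3) z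
      by (simp add: powr_add mult.assoc mult_left_mono)
    also have "\<dots> \<le> Bd * s powr C"
      using Bd[OF z] by (intro mult_right_mono) auto
    finally show ?thesis
      by simp
  next
    case False
    then show ?thesis
      by (simp add: lift_coeffs_def xnorm_zero)
  qed
  then have "bdd_above (range (\<lambda>v. xnorm av r (?F v) * s ^ mdeg v))"
    by (intro bdd_aboveI2)
  ultimately show ?thesis
    unfolding Kxy_dagger_def using rs(1,2) by blast
qed

lemma phi_surjective:
  fixes w :: "'N::finite \<Rightarrow> 'n::finite \<Rightarrow> int"
  assumes "G \<in> Ldagger av w"
  shows "\<exists>F\<in>Kxy_dagger av. phi av w F = G"
proof -
  obtain C where C: "\<forall>z\<in>CA w. \<exists>v. expo w v = z \<and> real (mdeg v) \<le> dfun w z + C"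
    using short_representation by metis
  obtain rep where rep: "\<forall>z\<in>CA w. expo w (rep z) = z \<and> real (mdeg (rep z)) \<le> dfun w z + C"
    using bchoice[OF C] by blast
  have "lift_coeffs rep w G \<in> Kxy_dagger av"
    using assms rep by (intro lift_coeffs_in_Kxy_dagger) auto
  moreover have "phi av w (lift_coeffs rep w G) = G"
    using assms rep by (intro phi_lift_coeffs) (auto simp: Ldagger_def)
  ultimately show ?thesis
    by blast
qed

end

theorem mainTheorem9:
  fixes av :: "'a::field_char_0 \<Rightarrow> real" and p :: nat and piK :: 'a
    and w :: "'N::finite \<Rightarrow> 'n::finite \<Rightarrow> int"
  assumes "prime p"
    and "local_field_over_Qp av p"
    and "piK ^ (p - 1) + of_nat p = 0"
    and "rank ((\<chi> i j. real_of_int (w j i)) :: real^'N^'n) = CARD('n)"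
  shows "(\<forall>G\<in>Ldagger av w. \<exists>F\<in>Kxy_dagger av. phi av w F = G)
       \<and> (\<forall>G\<in>Ldagger av w. \<exists>P\<in>D_dagger av. varphi av piK w P = G)"
proof -
  interpret ultrametric_abs_value av
    using assms(2) by (rule local_field_ultrametric_abs_value)
  have "piK \<noteq> 0"
  proof
    assume "piK = 0"
    with assms(3) prime_gt_1_nat[OF assms(1)] have "(of_nat p :: 'a) = 0"
      by (simp add: power_0_left)
    with assms(1) show False
      by simp
  qed
  moreover have "D_dagger av = Kxy_dagger av"
    unfolding D_dagger_def Kxy_dagger_def ..
  ultimately show ?thesis
    using phi_surjective varphi_eq_phi by metis
qed

end
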